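(* Fix an integer $b\ge2$ and $0<\alpha<1$. Let $C_\alpha=\tfrac{10}{3}\alpha^{-1}\log_2 10-\alpha^{-1}\log_2(1-2^{-\alpha})+2\alpha^{-1}-1$ and let $\ell_0\in\mathbb{N}$ satisfy $b^{\ell_0}>\max\{\frac{20}{b^{1-\alpha}-1},\,40C_\alpha b^{2C_\alpha(1-\alpha)}\}$. Put $\ell=b^{-\ell_0}$ and, for $i\in\{0,\dots,b^{\ell_0+3}-1\}$, $r_i=ib^{-\ell_0-3}$, $s_i=r_i+\ell$, and $g_i(x)=\overline{h}_\ell\big(x-\tfrac12(r_i+s_i-1)\big)$ (a $1$-periodic function). Then for all $x<y$ in $\mathbb{R}$ with $y-x<b^{-\ell_0-1}$ there exists $i\in\{0,\dots,b^{\ell_0+3}-1\}$ such that $$W^{\alpha,b}_{g_i}(y)-W^{\alpha,b}_{g_i}(x)\ge \tfrac{7}{10}\,b^{\alpha\ell_0-2(1-\alpha)}\,(y-x)^\alpha.$$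
   Context: For $0<\ell\le\tfrac12$, $h_\ell\colon[0,1)\to\mathbb{R}$ is defined by $h_\ell(x)=-\frac{x}{1-\ell}$ for $0\le x<\tfrac12(1-\ell)$, $h_\ell(x)=\frac{x}{\ell}-\frac{1}{2\ell}$ for $\tfrac12(1-\ell)\le x<\tfrac12(1+\ell)$, and $h_\ell(x)=\frac{1-x}{1-\ell}$ for $\tfrac12(1+\ell)\le x<1$; and $\overline{h}_\ell(x)=h_\ell(x-\lfloor x\rfloor)$ is its $1$-periodic extension to $\mathbb{R}$ (a continuous piecewise linear function with values in $[-\tfrac12,\tfrac12]$). For a $1$-periodic Lipschitz $g$, $W_g^{\alpha,b}(x)=\sum_{k=0}^\infty b^{-\alpha k}g(b^kx)$. *)

theory Defs
  imports "HOL-Analysis.Analysis"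
begin

definition h_fun :: "real \<Rightarrow> real \<Rightarrow> real" where
  "h_fun l x =
     (if x < (1 - l) / 2 then - x / (1 - l)
      else if x < (1 + l) / 2 then x / l - 1 / (2 * l)
      else (1 - x) / (1 - l))"

definition h_bar :: "real \<Rightarrow> real \<Rightarrow> real" where
  "h_bar l x = h_fun l (x - of_int \<lfloor>x\<rfloor>)"

definition W_fun :: "real \<Rightarrow> nat \<Rightarrow> (real \<Rightarrow> real) \<Rightarrow> real \<Rightarrow> real" where
  "W_fun \<alpha> b g x = (\<Sum>k. real b powr (- \<alpha> * real k) * g (real b ^ k * x))"

end

theory Submission
  imports Defs
begin

text \<open>Write \<open>\<rho> = b^(-\<alpha>)\<close>, so that \<open>W(y) - W(x) = \<Sum>j. \<rho>^j (g(b^j y) - g(b^j x))\<close>.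
  Pick the scale \<open>k\<close> with \<open>b^(\<ell>\<^sub>0+k) (y - x) \<in> [b^(-2), b^(-1))\<close> and a translate \<open>g\<^sub>i\<close>
  whose steep part (slope \<open>1/\<ell>\<close>) contains \<open>b^k x\<close> and \<open>b^k y\<close>; the \<open>k\<close>-th term is then
  at least \<open>b^(\<alpha>\<ell>\<^sub>0 - 2(1-\<alpha>)) (y - x)^\<alpha>\<close>. All other terms are bounded below because
  \<open>h_bar \<ell>\<close> has slope at least \<open>-1/(1-\<ell>)\<close> and modulus at most \<open>1/2\<close>: the terms before \<open>k\<close>
  form a geometric sum in \<open>b^(1-\<alpha>)\<close>, the next \<open>\<lfloor>2 C\<^sub>\<alpha>\<rfloor>\<close> are few, and the rest is a
  geometric tail in \<open>\<rho>\<close>. The choice of \<open>\<ell>\<^sub>0\<close> makes these losses at most \<open>1/20\<close>, \<open>1/20\<close>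
  and \<open>1/8\<close> of the main term (up to the factor \<open>1/(1-\<ell>)\<close>).\<close>

lemma h_fun_abs_le:
  assumes "0 < l" "l < 1" "0 \<le> x" "x < 1"
  shows "\<bar>h_fun l x\<bar> \<le> 1/2"
  using assms by (auto simp: h_fun_def divide_simps split: if_splits)

lemma h_bar_abs_le:
  assumes "0 < l" "l < 1"
  shows "\<bar>h_bar l t\<bar> \<le> 1/2"
  unfolding h_bar_def by (rule h_fun_abs_le) (use assms in \<open>auto, linarith+\<close>)

lemma h_fun_plus_linear_mono:
  assumes "0 < l" "l < 1" "0 \<le> x" "x \<le> y" "y < 1"
  shows "h_fun l x + x / (1 - l) \<le> h_fun l y + y / (1 - l)"
  using assms by (auto simp: h_fun_def divide_simps split: if_splits; simp add: algebra_simps)+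

lemma h_fun_plus_linear_bounds:
  assumes "0 < l" "l < 1" "0 \<le> x" "x < 1"
  shows "0 \<le> h_fun l x + x / (1 - l)" "h_fun l x + x / (1 - l) \<le> 1 / (1 - l)"
  using assms by (auto simp: h_fun_def divide_simps split: if_splits; simp add: algebra_simps)+

lemma h_bar_plus_linear_eq:
  "h_bar l x + x / (1 - l) = (h_fun l (frac x) + frac x / (1 - l)) + of_int \<lfloor>x\<rfloor> / (1 - l)"
  by (simp add: h_bar_def frac_def diff_divide_distrib)

text \<open>Slope \<open>-1/(1-l)\<close> is the smallest slope of \<open>h_bar l\<close>, and the jumps of the fractional
  part are compensated because \<open>h_fun l x + x/(1-l)\<close> ranges over \<open>[0, 1/(1-l)]\<close>.\<close>
lemma h_bar_plus_linear_mono: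
  assumes "0 < l" "l < 1" "x \<le> y"
  shows "h_bar l x + x / (1 - l) \<le> h_bar l y + y / (1 - l)"
proof (cases "\<lfloor>x\<rfloor> = \<lfloor>y\<rfloor>")
  case True
  then have "frac x \<le> frac y" using assms by (simp add: frac_def)
  then show ?thesis
    unfolding h_bar_plus_linear_eq True
    using h_fun_plus_linear_mono[OF assms(1,2) frac_ge_0 _ frac_lt_1] by simp
next
  case False
  then have "of_int \<lfloor>x\<rfloor> + 1 \<le> (of_int \<lfloor>y\<rfloor> :: real)"
    using floor_mono[OF assms(3)] by linarith
  then have "of_int \<lfloor>x\<rfloor> / (1 - l) + 1 / (1 - l) \<le> of_int \<lfloor>y\<rfloor> / (1 - l)"
    using assms by (simp add: divide_simps)
  then show ?thesis
    unfolding h_bar_plus_linear_eq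
    using h_fun_plus_linear_bounds[OF assms(1,2) frac_ge_0 frac_lt_1, of x]
      h_fun_plus_linear_bounds[OF assms(1,2) frac_ge_0 frac_lt_1, of y]
    by linarith
qed

lemma h_bar_diff_ge:
  assumes "0 < l" "l < 1" "x \<le> y"
  shows "- (y - x) / (1 - l) \<le> h_bar l y - h_bar l x"
  using h_bar_plus_linear_mono[OF assms] by (simp add: diff_divide_distrib)

lemma h_bar_steep_part:
  assumes "0 < l" "l < 1" "0 \<le> \<theta>" "\<theta> < l"
  shows "h_bar l (of_int m + (1 - l) / 2 + \<theta>) = \<theta> / l - 1/2"
proof -
  have "\<lfloor>of_int m + (1 - l) / 2 + \<theta>\<rfloor> = m"
    by (rule floor_unique) (use assms in \<open>simp_all add: field_simps\<close>)
  then show ?thesis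
    unfolding h_bar_def h_fun_def using assms by (auto simp: field_simps)
qed

definition tent_translate :: "nat \<Rightarrow> nat \<Rightarrow> nat \<Rightarrow> real \<Rightarrow> real" where
  "tent_translate b N i =
     (let l = real b powr (- real N);
          r = real i * real b powr (- real N - 3);
          s = r + l
      in (\<lambda>t. h_bar l (t - (r + s - 1) / 2)))"

lemma real_powr_neg_nat: "0 < b \<Longrightarrow> real b powr (- real n) = 1 / real b ^ n"
  by (simp add: powr_minus_divide powr_realpow)

lemma tent_translate_eq:
  assumes "0 < b"
  shows "tent_translate b N i t
    = h_bar (1 / real b ^ N) (t - real i / real b ^ (N + 3) + (1 - 1 / real b ^ N) / 2)"
proof -
  have "real b powr (- real N - 3) = 1 / real b ^ (N + 3)"
    using real_powr_neg_nat[OF assms, of "N + 3"] by (simp add: algebra_simps)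
  then show ?thesis
    unfolding tent_translate_def Let_def real_powr_neg_nat[OF assms]
    by (simp add: field_simps)
qed

lemma tent_translate_abs_le:
  assumes "2 \<le> b" "0 < N"
  shows "\<bar>tent_translate b N i t\<bar> \<le> 1/2"
  unfolding tent_translate_eq[OF order.strict_trans2[OF pos2 assms(1)]]
  by (rule h_bar_abs_le) (use assms in \<open>simp_all add: one_less_power\<close>)

lemma tent_translate_diff_ge:
  assumes "2 \<le> b" "0 < N" "s \<le> t"
  shows "- ((t - s) / (1 - 1 / real b ^ N)) \<le> tent_translate b N i t - tent_translate b N i s"
  unfolding tent_translate_eq[OF order.strict_trans2[OF pos2 assms(1)]]
  using h_bar_diff_ge[of "1 / real b ^ N" "s - real i / real b ^ (N + 3) + (1 - 1 / real b ^ N) / 2"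
      "t - real i / real b ^ (N + 3) + (1 - 1 / real b ^ N) / 2"] assms
  by (simp add: one_less_power minus_divide_left)

text \<open>The translates shift the steep part of \<open>h_bar l\<close> in steps \<open>b^(-N-3)\<close>, much finer
  than its width \<open>l = b^(-N)\<close>, so some translate is steep on any short interval.\<close>
lemma tent_translate_steep:
  assumes b: "2 \<le> b" and N: "0 < N" and d: "0 \<le> d" "d \<le> 1 / (2 * real b ^ N)"
  obtains i where "i < b ^ (N + 3)"
    "tent_translate b N i (X + d) - tent_translate b N i X = real b ^ N * d"
proof -
  define B where "B = real b"
  define P where "P = B ^ (N + 3)"
  define l where "l = 1 / B ^ N"
  have B: "2 \<le> B" using b unfolding B_def by simp
  have P: "0 < P" and l: "0 < l" "l < 1"
    unfolding P_def l_def using B N by (simp_all add: one_less_power)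
  define n where "n = \<lfloor>frac X * P\<rfloor>"
  have n: "0 \<le> n" "of_int n \<le> frac X * P" "frac X * P < of_int n + 1"
    unfolding n_def using P by (simp_all add: frac_ge_0)
  have n_lt: "of_int n < P"
    using n(2) mult_strict_right_mono[OF frac_lt_1 P, of X] by simp
  define \<theta> where "\<theta> = frac X - of_int n / P"
  have "of_int n / P \<le> frac X" "frac X < (of_int n + 1) / P"
    using n P by (simp_all add: field_simps)
  then have \<theta>: "0 \<le> \<theta>" "\<theta> < 1 / P"
    unfolding \<theta>_def by (simp_all add: add_divide_distrib)
  have "1 / P \<le> l / 8"
  proof -
    have "(2::real) ^ 3 \<le> B ^ 3" using B by (intro power_mono) auto
    then show ?thesis unfolding P_def l_def using B by (simp add: power_add field_simps)
  qed
  then have width: "\<theta> + d < l" using \<theta> d unfolding l_def B_def by (simp add: field_simps)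
  then have "\<theta> < l" using d by linarith
  have shift: "X + e - real (nat n) / P + (1 - l) / 2 = of_int \<lfloor>X\<rfloor> + (1 - l) / 2 + (\<theta> + e)" for e
    unfolding \<theta>_def frac_def using n(1) by simp
  have tent: "tent_translate b N (nat n) (X + e) = h_bar l (of_int \<lfloor>X\<rfloor> + (1 - l) / 2 + (\<theta> + e))" for e
    using tent_translate_eq[of b N "nat n" "X + e"] b shift[of e] unfolding P_def l_def B_def by simp
  have "tent_translate b N (nat n) (X + d) - tent_translate b N (nat n) X = d / l"
    using tent[of d] tent[of 0] h_bar_steep_part[OF l \<theta>(1) \<open>\<theta> < l\<close>, of "\<lfloor>X\<rfloor>"] d
      h_bar_steep_part[OF l _ width, of "\<lfloor>X\<rfloor>"] \<theta>
    by (simp add: add_divide_distrib)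
  moreover have "nat n < b ^ (N + 3)"
    using n(1) n_lt unfolding P_def B_def by (simp flip: of_nat_power)
  ultimately show ?thesis using that unfolding l_def B_def by simp
qed

lemma sums_ge_split_estimate:
  fixes a :: "nat \<Rightarrow> real"
  assumes sums: "a sums S" and \<rho>: "0 < \<rho>" "\<rho> < 1" and q: "1 < q" and c: "0 \<le> c"
    and coarse: "\<And>j. - (\<rho> ^ j) \<le> a j" and fine: "\<And>j. - (c * q ^ j) \<le> a j"
  shows "a k - c * q ^ k / (q - 1) - c * real m * q ^ (k + m) - \<rho> ^ Suc (k + m) / (1 - \<rho>) \<le> S"
proof -
  define K where "K = Suc (k + m)"
  have head: "- (c * q ^ k / (q - 1)) \<le> sum a {..<k}"
  proof -
    have "c * ((q ^ k - 1) / (q - 1)) \<le> c * (q ^ k / (q - 1))"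
      using q c by (intro mult_left_mono divide_right_mono) auto
    then have "- (c * q ^ k / (q - 1)) \<le> - (c * ((q ^ k - 1) / (q - 1)))" by simp
    also have "\<dots> = (\<Sum>j<k. - (c * q ^ j))"
      using q by (simp add: geometric_sum sum_negf sum_distrib_left[symmetric])
    also have "\<dots> \<le> sum a {..<k}" by (intro sum_mono fine)
    finally show ?thesis .
  qed
  have middle: "- (c * real m * q ^ (k + m)) \<le> sum a {Suc k..<K}"
  proof -
    have "(\<Sum>j\<in>{Suc k..<K}. c * q ^ j) \<le> real (card {Suc k..<K}) * (c * q ^ (k + m))"
      using q c by (intro sum_bounded_above mult_left_mono power_increasing) (auto simp: K_def)
    moreover have "card {Suc k..<K} = m" by (simp add: K_def)
    ultimately have "- (c * real m * q ^ (k + m)) \<le> (\<Sum>j\<in>{Suc k..<K}. - (c * q ^ j))"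
      by (simp add: sum_negf mult_ac)
    also have "\<dots> \<le> sum a {Suc k..<K}" by (intro sum_mono fine)
    finally show ?thesis .
  qed
  have tail: "- (\<rho> ^ K / (1 - \<rho>)) \<le> S - sum a {..<K}"
  proof (rule sums_le)
    show "(\<lambda>t. - (\<rho> ^ K * \<rho> ^ t)) sums (- (\<rho> ^ K / (1 - \<rho>)))"
      using sums_minus[OF sums_mult[OF geometric_sums, of \<rho> "\<rho> ^ K"]] \<rho> by simp
    show "(\<lambda>t. a (t + K)) sums (S - sum a {..<K})"
      using sums by (rule sums_split_initial_segment)
    show "- (\<rho> ^ K * \<rho> ^ t) \<le> a (t + K)" for t
      using coarse[of "t + K"] by (simp add: power_add mult.commute)
  qed
  have "sum a {..<K} = sum a {..<k} + a k + sum a {Suc k..<K}"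
  proof -
    have "sum a {..<K} = sum a {..<k} + sum a {k..<K}"
      unfolding K_def lessThan_atLeast0 by (rule sum.atLeastLessThan_concat[symmetric]) auto
    moreover have "sum a {k..<K} = a k + sum a {Suc k..<K}"
      unfolding K_def by (rule sum.atLeast_Suc_lessThan) simp
    ultimately show ?thesis by simp
  qed
  then show ?thesis using head middle tail unfolding K_def by linarith
qed

lemma powr_one_minus_eq:
  fixes B :: real
  assumes "0 < B"
  shows "B powr (1 - a) = B powr - a * B"
proof -
  have "B powr (1 - a) = B powr (- a + 1)" by simp
  also have "\<dots> = B powr - a * B powr 1" by (rule powr_add)
  finally show ?thesis using assms by simp
qed

lemma W_fun_diff_sums:
  assumes b: "1 < b" and \<alpha>: "0 < \<alpha>" and bounded: "\<And>t. \<bar>g t\<bar> \<le> 1/2"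
  shows "(\<lambda>j. (real b powr - \<alpha>) ^ j * (g (real b ^ j * y) - g (real b ^ j * x)))
           sums (W_fun \<alpha> b g y - W_fun \<alpha> b g x)"
proof -
  define \<rho> where "\<rho> = real b powr - \<alpha>"
  have \<rho>: "0 < \<rho>" "\<rho> < 1" unfolding \<rho>_def using b \<alpha> by (auto intro: powr_less_one)
  have W: "(\<lambda>j. \<rho> ^ j * g (real b ^ j * z)) sums W_fun \<alpha> b g z" for z
  proof -
    have "summable (\<lambda>j. \<rho> ^ j * g (real b ^ j * z))"
    proof (rule summable_comparison_test'[where g = "\<lambda>j. \<rho> ^ j" and N = 0])
      show "summable (\<lambda>j. \<rho> ^ j)" using \<rho> by (intro summable_geometric) auto
      show "norm (\<rho> ^ j * g (real b ^ j * z)) \<le> \<rho> ^ j" for j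
        using mult_left_mono[OF bounded[of "real b ^ j * z"], of "\<rho> ^ j"] \<rho> by (simp add: abs_mult)
    qed
    moreover have "\<rho> ^ j = real b powr (- \<alpha> * real j)" for j
      unfolding \<rho>_def using b by (simp add: powr_realpow[symmetric] powr_powr)
    ultimately show ?thesis unfolding W_fun_def by (simp add: summable_sums)
  qed
  show ?thesis
    using sums_diff[OF W W] unfolding \<rho>_def by (simp add: right_diff_distrib)
qed

lemma W_fun_diff_ge_split:
  fixes b k m :: nat
  assumes b: "1 < b" and \<alpha>: "0 < \<alpha>" "\<alpha> < 1"
    and bounded: "\<And>t. \<bar>g t\<bar> \<le> 1/2"
    and lip: "\<And>s t. s \<le> t \<Longrightarrow> - (L * (t - s)) \<le> g t - g s" and L: "0 \<le> L"
    and xy: "x < y"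
  defines "\<rho> \<equiv> real b powr - \<alpha>" and "q \<equiv> real b powr (1 - \<alpha>)"
  shows "\<rho> ^ k * (g (real b ^ k * y) - g (real b ^ k * x))
      - L * (y - x) * q ^ k / (q - 1) - L * (y - x) * real m * q ^ (k + m)
      - \<rho> ^ Suc (k + m) / (1 - \<rho>) \<le> W_fun \<alpha> b g y - W_fun \<alpha> b g x"
proof (rule sums_ge_split_estimate[OF W_fun_diff_sums[OF b \<alpha>(1) bounded, folded \<rho>_def]])
  show \<rho>: "0 < \<rho>" "\<rho> < 1" unfolding \<rho>_def using b \<alpha> by (auto intro: powr_less_one)
  show "1 < q" unfolding q_def using b \<alpha> by (intro gr_one_powr) auto
  show "0 \<le> L * (y - x)" using L xy by simp
  show "- (\<rho> ^ j) \<le> \<rho> ^ j * (g (real b ^ j * y) - g (real b ^ j * x))" for j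
    using mult_left_mono[of "-1" "g (real b ^ j * y) - g (real b ^ j * x)" "\<rho> ^ j"]
      bounded[of "real b ^ j * y"] bounded[of "real b ^ j * x"] \<rho>
    by (simp add: abs_le_iff)
  show "- (L * (y - x) * q ^ j) \<le> \<rho> ^ j * (g (real b ^ j * y) - g (real b ^ j * x))" for j
  proof -
    have "\<rho> * real b = q" unfolding \<rho>_def q_def using b by (simp add: powr_one_minus_eq)
    then have eq: "L * (y - x) * q ^ j = \<rho> ^ j * (L * (real b ^ j * y - real b ^ j * x))"
      by (simp add: power_mult_distrib[symmetric] algebra_simps)
    have "- (L * (real b ^ j * y - real b ^ j * x)) \<le> g (real b ^ j * y) - g (real b ^ j * x)"
      using xy b by (intro lip) simp
    then have "\<rho> ^ j * - (L * (real b ^ j * y - real b ^ j * x))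
        \<le> \<rho> ^ j * (g (real b ^ j * y) - g (real b ^ j * x))"
      using \<rho> by (intro mult_left_mono) auto
    then show ?thesis unfolding eq mult_minus_right .
  qed
qed

lemma exists_power_scale_window:
  fixes B v :: real
  assumes "1 < B" "0 < v" "v < 1 / B"
  shows "\<exists>k. 1 / B ^ 2 \<le> v * B ^ k \<and> v * B ^ k < 1 / B"
proof -
  obtain n where "1 / (B ^ 2 * v) < B ^ n" using real_arch_pow[OF assms(1)] by blast
  then have n: "1 / B ^ 2 \<le> v * B ^ n" using assms by (simp add: field_simps)
  define k where "k = (LEAST k. 1 / B ^ 2 \<le> v * B ^ k)"
  have k: "1 / B ^ 2 \<le> v * B ^ k" unfolding k_def by (rule LeastI[of _ n]) (rule n)
  have "v * B ^ k < 1 / B"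
  proof (cases k)
    case 0
    then show ?thesis using assms by simp
  next
    case (Suc j)
    then have "\<not> 1 / B ^ 2 \<le> v * B ^ j"
      using not_less_Least[of j "\<lambda>k. 1 / B ^ 2 \<le> v * B ^ k"] unfolding k_def by simp
    then have "v * B ^ j < 1 / B ^ 2" by simp
    then have "B * (v * B ^ j) < B * (1 / B ^ 2)" using assms by (intro mult_strict_left_mono) auto
    then show ?thesis using Suc assms by (simp add: power2_eq_square field_simps)
  qed
  with k show ?thesis by blast
qed

lemma exists_scale_for_increment:
  assumes b: "2 \<le> b" and \<delta>: "0 < \<delta>" "\<delta> < real b powr (- real N - 1)"
  obtains k where "1 / real b ^ 2 \<le> real b ^ (N + k) * \<delta>" "real b ^ k * \<delta> \<le> 1 / (2 * real b ^ N)"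
proof -
  define B where "B = real b"
  have B: "2 \<le> B" using b unfolding B_def by simp
  have "real b powr (- real N - 1) = real b powr (- real (N + 1))"
    by (rule arg_cong[where f = "\<lambda>e. real b powr e"]) simp
  also have "\<dots> = 1 / B ^ (N + 1)" unfolding B_def using b by (intro real_powr_neg_nat) simp
  finally have "B ^ N * \<delta> < B ^ N * (1 / B ^ (N + 1))"
    using \<delta> B by (intro mult_strict_left_mono) auto
  then have "B ^ N * \<delta> < 1 / B" using B by simp
  then obtain k where k: "1 / B ^ 2 \<le> B ^ N * \<delta> * B ^ k" "B ^ N * \<delta> * B ^ k < 1 / B"
    using exists_power_scale_window[of B "B ^ N * \<delta>"] B \<delta> by auto
  have "1 / B \<le> 1 / 2" using B by (simp add: field_simps)
  then have "B ^ N * (B ^ k * \<delta>) * 2 \<le> 1" using k(2) by (simp add: mult_ac)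
  then have "B ^ k * \<delta> \<le> 1 / (2 * B ^ N)" using B by (simp add: field_simps)
  with k(1) show ?thesis using that unfolding B_def by (simp add: power_add mult_ac)
qed

definition C_const :: "real \<Rightarrow> real" where
  "C_const \<alpha> = 10 / 3 / \<alpha> * log 2 10 - log 2 (1 - 2 powr (- \<alpha>)) / \<alpha> + 2 / \<alpha> - 1"

lemma log2_10_ge_3: "3 \<le> log 2 (10 :: real)"
proof -
  have "log 2 (8 :: real) = 3" using log_pow_cancel[of 2 3] by simp
  then show ?thesis using log_le_cancel_iff[of 2 8 10] by linarith
qed

lemma C_const_ge_one:
  assumes "0 < \<alpha>" "\<alpha> < 1"
  shows "1 \<le> C_const \<alpha>"
proof -
  have "log 2 (1 - 2 powr (- \<alpha>)) \<le> 0" using assms by (simp add: powr_less_one)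
  then have "0 \<le> - log 2 (1 - 2 powr (- \<alpha>)) / \<alpha>" using assms by (simp add: divide_nonpos_pos)
  moreover have "10 / \<alpha> \<le> 10 / 3 / \<alpha> * log 2 10" using log2_10_ge_3 assms by (simp add: field_simps)
  moreover have "2 \<le> 2 / \<alpha>" using assms by (simp add: field_simps)
  moreover have "0 \<le> 10 / \<alpha>" using assms by simp
  ultimately show ?thesis unfolding C_const_def by linarith
qed

text \<open>This is where the shape of \<open>C_const\<close> comes from: \<open>2 - 2 \<alpha> C_const \<alpha> \<le> -20 + log 2 (1 - 2 powr (-\<alpha>))\<close>.\<close>
lemma C_const_power_bound:
  fixes B :: real
  assumes B: "2 \<le> B" and \<alpha>: "0 < \<alpha>" "\<alpha> < 1" and T: "2 * C_const \<alpha> \<le> real T"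
  shows "B ^ 2 * (B powr - \<alpha>) ^ T \<le> (1 - B powr - \<alpha>) / 8"
proof -
  define w where "w = 1 - 2 powr (- \<alpha>)"
  define e where "e = 2 - 2 * (\<alpha> * C_const \<alpha>)"
  have w: "0 < w" "w \<le> 1 - B powr - \<alpha>"
    unfolding w_def using B \<alpha> powr_mono2'[of "- \<alpha>" 2 B] by (auto simp: powr_less_one)
  have e: "e \<le> -20 + log 2 w" "e \<le> 0"
  proof -
    have "\<alpha> * C_const \<alpha> = 10 / 3 * log 2 10 - log 2 w + 2 - \<alpha>"
      unfolding C_const_def w_def using \<alpha> by (simp add: field_simps)
    moreover have "log 2 w \<le> 0" using w(1) unfolding w_def by simp
    ultimately show "e \<le> -20 + log 2 w" "e \<le> 0" unfolding e_def using log2_10_ge_3 \<alpha> by linarith+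
  qed
  have "(B powr - \<alpha>) ^ T = B powr (- \<alpha> * real T)"
    using B by (simp add: powr_realpow[symmetric] powr_powr)
  also have "\<dots> \<le> B powr (- (2 * (\<alpha> * C_const \<alpha>)))"
    using B T \<alpha> by (intro powr_mono) (auto simp: mult_left_mono)
  finally have "B ^ 2 * (B powr - \<alpha>) ^ T \<le> B powr 2 * B powr (- (2 * (\<alpha> * C_const \<alpha>)))"
    using B by (simp add: powr_numeral)
  also have "\<dots> = B powr e" unfolding e_def by (simp add: powr_add[symmetric])
  also have "\<dots> \<le> 2 powr e" using e B by (intro powr_mono2') auto
  also have "\<dots> \<le> 2 powr (-20 + log 2 w)" using e by (intro powr_mono) auto
  also have "\<dots> = 2 powr (-20) * w" by (subst powr_add) (use w in simp)
  also have "\<dots> \<le> 1 / 8 * w" using w powr_mono[of "-20" "-3" "2 :: real"]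
    by (intro mult_right_mono) (auto simp: powr_neg_numeral)
  finally show ?thesis using w by simp
qed

lemma C_const_gap_imp_gt_40:
  fixes b :: real
  assumes "1 \<le> b" "0 < \<alpha>" "\<alpha> < 1"
    and "40 * C_const \<alpha> * b powr (2 * C_const \<alpha> * (1 - \<alpha>)) < b ^ N"
  shows "40 < b ^ N"
proof -
  have "1 \<le> C_const \<alpha>" using C_const_ge_one assms(2,3) .
  moreover have "1 \<le> b powr (2 * C_const \<alpha> * (1 - \<alpha>))"
    using calculation assms by (intro ge_one_powr_ge_zero) auto
  ultimately have "1 * 1 \<le> C_const \<alpha> * b powr (2 * C_const \<alpha> * (1 - \<alpha>))"
    by (intro mult_mono) auto
  then show ?thesis using assms(4) by linarith
qed

lemma nat_floor_mult_power_le: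
  fixes q y :: real
  assumes "1 \<le> q" "0 \<le> y"
  shows "real (nat \<lfloor>y\<rfloor>) * q ^ nat \<lfloor>y\<rfloor> \<le> y * q powr y"
proof (rule mult_mono)
  show "real (nat \<lfloor>y\<rfloor>) \<le> y" using assms by linarith
  have "q ^ nat \<lfloor>y\<rfloor> = q powr real (nat \<lfloor>y\<rfloor>)" using powr_realpow[of q "nat \<lfloor>y\<rfloor>"] assms by simp
  then show "q ^ nat \<lfloor>y\<rfloor> \<le> q powr y"
    using assms powr_mono[of "real (nat \<lfloor>y\<rfloor>)" y q] by linarith
qed (use assms in auto)

lemma powr_scaled_increment_ge:
  fixes B \<delta> :: real
  assumes B: "1 < B" and \<alpha>: "0 < \<alpha>" "\<alpha> < 1" and \<delta>: "0 < \<delta>"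
    and window: "1 / B ^ 2 \<le> B ^ (N + k) * \<delta>"
  shows "B powr (\<alpha> * real N - 2 * (1 - \<alpha>)) * \<delta> powr \<alpha> \<le> (B powr - \<alpha>) ^ k * (B ^ (N + k) * \<delta>)"
proof -
  define u where "u = B powr real (N + k + 2) * \<delta>"
  have "B powr real (N + k + 2) = B ^ (N + k + 2)" by (rule powr_realpow) (use B in simp)
  also have "\<dots> = B ^ (N + k) * B ^ 2" by (rule power_add)
  finally have "1 \<le> u" using window B unfolding u_def by (simp add: field_simps)
  then have "1 \<le> u powr (1 - \<alpha>)" using \<alpha> by (intro ge_one_powr_ge_zero) auto
  then have "B powr (\<alpha> * real N - 2 * (1 - \<alpha>)) * \<delta> powr \<alpha> * 1
      \<le> B powr (\<alpha> * real N - 2 * (1 - \<alpha>)) * \<delta> powr \<alpha> * u powr (1 - \<alpha>)"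
    by (intro mult_left_mono) auto
  also have "u powr (1 - \<alpha>) = B powr (real (N + k + 2) * (1 - \<alpha>)) * \<delta> powr (1 - \<alpha>)"
    unfolding u_def using B \<delta> by (simp add: powr_mult powr_powr del: of_nat_add)
  also have "B powr (\<alpha> * real N - 2 * (1 - \<alpha>)) * \<delta> powr \<alpha> * \<dots>
      = B powr (\<alpha> * real N - 2 * (1 - \<alpha>) + real (N + k + 2) * (1 - \<alpha>)) * \<delta> powr (\<alpha> + (1 - \<alpha>))"
    by (simp only: powr_add mult_ac)
  also have "\<dots> = B powr (- \<alpha> * real k) * (B powr real (N + k) * \<delta>)"
    using \<delta> by (simp add: powr_add[symmetric] algebra_simps)
  also have "\<dots> = (B powr - \<alpha>) ^ k * (B ^ (N + k) * \<delta>)"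
    using B by (simp add: powr_realpow[symmetric] powr_powr del: of_nat_add)
  finally show ?thesis by simp
qed

lemma increment_losses_le:
  fixes B \<delta> :: real and N k :: nat
  assumes B: "2 \<le> B" and \<alpha>: "0 < \<alpha>" "\<alpha> < 1" and \<delta>: "0 \<le> \<delta>"
    and gap_q: "20 / (B powr (1 - \<alpha>) - 1) < B ^ N"
    and gap_C: "40 * C_const \<alpha> * B powr (2 * C_const \<alpha> * (1 - \<alpha>)) < B ^ N"
    and window: "1 / B ^ 2 \<le> B ^ (N + k) * \<delta>"
  defines "\<rho> \<equiv> B powr - \<alpha>" and "q \<equiv> B powr (1 - \<alpha>)" and "m \<equiv> nat \<lfloor>2 * C_const \<alpha>\<rfloor>"
    and "M \<equiv> (B powr - \<alpha>) ^ k * (B ^ (N + k) * \<delta>)"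
  shows "\<delta> * q ^ k / (q - 1) \<le> M / 20"
    and "\<delta> * real m * q ^ (k + m) \<le> M / 20"
    and "\<rho> ^ Suc (k + m) / (1 - \<rho>) \<le> M / 8"
proof -
  have \<rho>: "0 < \<rho>" "\<rho> < 1" unfolding \<rho>_def using B \<alpha> by (auto intro: powr_less_one)
  have q: "1 < q" unfolding q_def using B \<alpha> by (intro gr_one_powr) auto
  have C: "1 \<le> C_const \<alpha>" using C_const_ge_one[OF \<alpha>] .
  have "\<rho> * B = q" unfolding \<rho>_def q_def using B by (simp add: powr_one_minus_eq)
  then have M_eq: "M = q ^ k * B ^ N * \<delta>"
    unfolding M_def \<rho>_def[symmetric] by (simp add: power_add power_mult_distrib[symmetric] mult_ac)
  have "1 / (q - 1) \<le> B ^ N / 20" using gap_q q unfolding q_def by (simp add: field_simps)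
  then have "\<delta> * q ^ k * (1 / (q - 1)) \<le> \<delta> * q ^ k * (B ^ N / 20)"
    using \<delta> q by (intro mult_left_mono) auto
  then show "\<delta> * q ^ k / (q - 1) \<le> M / 20" unfolding M_eq by (simp add: mult_ac)
  have "real m * q ^ m \<le> 2 * C_const \<alpha> * q powr (2 * C_const \<alpha>)"
    unfolding m_def using q C by (intro nat_floor_mult_power_le) auto
  also have "\<dots> \<le> B ^ N / 20"
    using gap_C B unfolding q_def by (simp add: powr_powr mult_ac)
  finally have "\<delta> * q ^ k * (real m * q ^ m) \<le> \<delta> * q ^ k * (B ^ N / 20)"
    using \<delta> q by (intro mult_left_mono) auto
  then show "\<delta> * real m * q ^ (k + m) \<le> M / 20" unfolding M_eq by (simp add: power_add mult_ac)
  have "2 * C_const \<alpha> \<le> real (Suc m)" unfolding m_def using C by linarith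
  then have "B ^ 2 * \<rho> ^ Suc m \<le> (1 - \<rho>) / 8"
    using C_const_power_bound[OF B \<alpha>] unfolding \<rho>_def by blast
  then have "\<rho> ^ Suc m / (1 - \<rho>) \<le> 1 / 8 * (1 / B ^ 2)" using \<rho> B by (simp add: field_simps)
  also have "\<dots> \<le> 1 / 8 * (B ^ (N + k) * \<delta>)" using window by simp
  finally have "\<rho> ^ k * (\<rho> ^ Suc m / (1 - \<rho>)) \<le> \<rho> ^ k * (1 / 8 * (B ^ (N + k) * \<delta>))"
    using \<rho> by (intro mult_left_mono) auto
  then show "\<rho> ^ Suc (k + m) / (1 - \<rho>) \<le> M / 8"
    unfolding M_def \<rho>_def[symmetric] by (simp add: power_add mult_ac)
qed

lemma W_fun_increment_ge:
  fixes b N k :: nat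
  assumes b: "2 \<le> b" and \<alpha>: "0 < \<alpha>" "\<alpha> < 1"
    and gap_q: "20 / (real b powr (1 - \<alpha>) - 1) < real b ^ N"
    and gap_C: "40 * C_const \<alpha> * real b powr (2 * C_const \<alpha> * (1 - \<alpha>)) < real b ^ N"
    and bounded: "\<And>t. \<bar>g t\<bar> \<le> 1/2"
    and lip: "\<And>s t. s \<le> t \<Longrightarrow> - ((t - s) / (1 - 1 / real b ^ N)) \<le> g t - g s"
    and xy: "x < y" and window: "1 / real b ^ 2 \<le> real b ^ (N + k) * (y - x)"
    and steep: "g (real b ^ k * y) - g (real b ^ k * x) = real b ^ N * (real b ^ k * (y - x))"
  shows "7/10 * ((real b powr - \<alpha>) ^ k * (real b ^ (N + k) * (y - x)))
    \<le> W_fun \<alpha> b g y - W_fun \<alpha> b g x"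
proof -
  define \<rho> q m L M where "\<rho> = real b powr - \<alpha>" and "q = real b powr (1 - \<alpha>)"
    and "m = nat \<lfloor>2 * C_const \<alpha>\<rfloor>" and "L = 1 / (1 - 1 / real b ^ N)"
    and "M = \<rho> ^ k * (real b ^ (N + k) * (y - x))"
  have "2 \<le> real b" "0 \<le> y - x" using b xy by simp_all
  note losses = increment_losses_le[OF this(1) \<alpha> this(2) gap_q gap_C window]
  have "40 < real b ^ N" using C_const_gap_imp_gt_40[OF _ \<alpha> gap_C] b by simp
  then have L: "0 \<le> L" "L \<le> 40 / 39" unfolding L_def using b by (simp_all add: field_simps)
  have M: "0 \<le> M" unfolding M_def \<rho>_def using xy by simp
  have "\<rho> ^ k * (g (real b ^ k * y) - g (real b ^ k * x)) - L * (y - x) * q ^ k / (q - 1)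
      - L * (y - x) * real m * q ^ (k + m) - \<rho> ^ Suc (k + m) / (1 - \<rho>)
      \<le> W_fun \<alpha> b g y - W_fun \<alpha> b g x"
    unfolding \<rho>_def q_def
    using W_fun_diff_ge_split[of b \<alpha> g L x y k m] b \<alpha> bounded lip L(1) xy by (simp add: L_def)
  moreover have "\<rho> ^ k * (g (real b ^ k * y) - g (real b ^ k * x)) = M"
    using steep unfolding M_def by (simp add: power_add mult_ac)
  moreover have "L * (y - x) * q ^ k / (q - 1) \<le> L * (M / 20)"
    using mult_left_mono[OF losses(1) L(1)] unfolding M_def \<rho>_def q_def by (simp add: mult.assoc)
  moreover have "L * (y - x) * real m * q ^ (k + m) \<le> L * (M / 20)"
    using mult_left_mono[OF losses(2) L(1)] unfolding M_def \<rho>_def q_def m_def by (simp add: mult.assoc)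
  moreover have "\<rho> ^ Suc (k + m) / (1 - \<rho>) \<le> M / 8"
    using losses(3) unfolding M_def \<rho>_def m_def .
  ultimately have "M - L * (M / 20) - L * (M / 20) - M / 8 \<le> W_fun \<alpha> b g y - W_fun \<alpha> b g x"
    by linarith
  moreover have "L * (M / 20) \<le> 40 / 39 * (M / 20)" using L M by (intro mult_right_mono) auto
  ultimately show ?thesis using M unfolding M_def \<rho>_def by linarith
qed

theorem mainTheorem4:
  fixes b :: nat and \<alpha> :: real and l0 :: nat
  assumes hb: "b \<ge> 2"
    and halpha: "0 < \<alpha>" "\<alpha> < 1"
    and hl0: "let C = 10 / 3 / \<alpha> * log 2 10 - log 2 (1 - 2 powr (- \<alpha>)) / \<alpha> + 2 / \<alpha> - 1
            in real b ^ l0 > max (20 / (real b powr (1 - \<alpha>) - 1))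
                                   (40 * C * real b powr (2 * C * (1 - \<alpha>)))"
  shows "\<forall>x y :: real. x < y \<and> y - x < real b powr (- real l0 - 1) \<longrightarrow>
    (\<exists>i \<in> {0..<b ^ (l0 + 3)}.
       let l = real b powr (- real l0);
           r = real i * real b powr (- real l0 - 3);
           s = r + l;
           g = (\<lambda>t. h_bar l (t - (r + s - 1) / 2))
       in W_fun \<alpha> b g y - W_fun \<alpha> b g x
            \<ge> 7 / 10 * real b powr (\<alpha> * real l0 - 2 * (1 - \<alpha>)) * (y - x) powr \<alpha>)"
proof (intro allI impI)
  fix x y :: real
  assume xy: "x < y \<and> y - x < real b powr (- real l0 - 1)"
  have gap_q: "20 / (real b powr (1 - \<alpha>) - 1) < real b ^ l0"
    and gap_C: "40 * C_const \<alpha> * real b powr (2 * C_const \<alpha> * (1 - \<alpha>)) < real b ^ l0"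
    using hl0 unfolding Let_def C_const_def[symmetric] by simp_all
  have N: "0 < l0" using C_const_gap_imp_gt_40[OF _ halpha gap_C] hb by (cases l0) auto
  obtain k where k: "1 / real b ^ 2 \<le> real b ^ (l0 + k) * (y - x)"
    "real b ^ k * (y - x) \<le> 1 / (2 * real b ^ l0)"
    using exists_scale_for_increment[OF hb, of "y - x" l0] xy by auto
  obtain i where i: "i < b ^ (l0 + 3)" and steep:
    "tent_translate b l0 i (real b ^ k * x + real b ^ k * (y - x)) - tent_translate b l0 i (real b ^ k * x)
       = real b ^ l0 * (real b ^ k * (y - x))"
    using tent_translate_steep[OF hb N _ k(2)] xy by auto
  have "7/10 * ((real b powr - \<alpha>) ^ k * (real b ^ (l0 + k) * (y - x)))
      \<le> W_fun \<alpha> b (tent_translate b l0 i) y - W_fun \<alpha> b (tent_translate b l0 i) x"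
    using W_fun_increment_ge[OF hb halpha gap_q gap_C] tent_translate_abs_le tent_translate_diff_ge
      hb N xy k(1) steep by (simp add: algebra_simps)
  moreover have "real b powr (\<alpha> * real l0 - 2 * (1 - \<alpha>)) * (y - x) powr \<alpha>
      \<le> (real b powr - \<alpha>) ^ k * (real b ^ (l0 + k) * (y - x))"
    using powr_scaled_increment_ge[of "real b" \<alpha> "y - x" l0 k] hb halpha xy k(1) by simp
  ultimately show "\<exists>i \<in> {0..<b ^ (l0 + 3)}. let l = real b powr (- real l0);
           r = real i * real b powr (- real l0 - 3); s = r + l; g = (\<lambda>t. h_bar l (t - (r + s - 1) / 2))
       in W_fun \<alpha> b g y - W_fun \<alpha> b g x
            \<ge> 7 / 10 * real b powr (\<alpha> * real l0 - 2 * (1 - \<alpha>)) * (y - x) powr \<alpha>"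
    using i unfolding tent_translate_def Let_def by force
qed

end
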